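(* Let $n,d\ge1$, $K\in\{1,\dots,d\}$, $0<\mu\le L\le L_{\max}\le nL$ and $r\in[0,1]$. Let the worker compressors be Rand$K_\omega$ and the server compressor Top$K_\alpha$ with (i) $K_\omega=K$ and $K_\alpha=\min\{\lceil\frac{1-r}{r}K\rceil,d\}$ if $r\in[0,\frac12]$, (ii) $K_\omega=\min\{\lceil\frac{r}{1-r}K\rceil,d\}$ and $K_\alpha=K$ if $r\in(\frac12,1]$; correspondingly $\omega=\frac{d}{K_\omega}-1$ and $\alpha=\frac{K_\alpha}{d}$. With $K^r=(1-r)K_\omega+rK_\alpha$, $\mu^r_{\omega,\alpha}=rd/K^r$ and $$\mathfrak m^r_{\mathrm{realistic}}=K^r\Big(\sqrt{\tfrac{L\max\{\omega+1,\mu^r_{\omega,\alpha}\}}{\alpha\mu}}+\sqrt{\tfrac{L_{\max}\omega\max\{\omega+1,\mu^r_{\omega,\alpha}\}}{n\mu}}+\tfrac1\alpha+\omega+\mu^r_{\omega,\alpha}\Big)+d,$$ we have $\mathfrak m^r_{\mathrm{realistic}}=\widetilde{\mathcal O}(\mathfrak m_{\mathrm{AGD}})$ with $\mathfrak m_{\mathrm{AGD}}=d\sqrt{L/\mu}$, i.e. $\mathfrak m^r_{\mathrm{realistic}}\le C\,d\sqrt{L/\mu}$ for a universal constant $C$ (up to logarithmic factors).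
   Context: Rand$K$: the unbiased compressor that keeps $K$ uniformly random coordinates of its input scaled by $d/K$ (variance parameter $\omega=d/K-1$). Top$K$: the biased compressor keeping the $K$ largest-magnitude coordinates (contraction parameter $\alpha=K/d$). $\mathfrak m^r_{\mathrm{realistic}}$ is (up to logarithmic factors) the total communication complexity $(1-r)\cdot(\text{worker-to-server cost})+r\cdot(\text{server-to-worker cost})$ of the method 2Direction for minimizing $f=\frac1n\sum_if_i$ on $\mathbb R^d$ ($f_i$ $L_i$-smooth convex, $L_{\max}=\max_iL_i$, $f$ $L$-smooth and $\mu$-strongly convex), and $d\sqrt{L/\mu}$ is (up to logarithmic factors) that of accelerated gradient descent with uncompressed communication. *)

theory Defs
  imports Complex_Main
begin

text \<open>Number of coordinates kept by the worker compressor Rand K_omega.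
  For r = 1 the ratio r/(1-r) is +infinity, so the cap d applies.\<close>
definition K_omega :: "nat \<Rightarrow> nat \<Rightarrow> real \<Rightarrow> nat" where
  "K_omega d K r =
     (if r \<le> 1/2 then K
      else if r = 1 then d
      else min (nat \<lceil>r / (1 - r) * real K\<rceil>) d)"

text \<open>Number of coordinates kept by the server compressor Top K_alpha.
  For r = 0 the ratio (1-r)/r is +infinity, so the cap d applies.\<close>
definition K_alpha :: "nat \<Rightarrow> nat \<Rightarrow> real \<Rightarrow> nat" where
  "K_alpha d K r =
     (if r \<le> 1/2 then (if r = 0 then d else min (nat \<lceil>(1 - r) / r * real K\<rceil>) d)
      else K)"

definition omega_par :: "nat \<Rightarrow> nat \<Rightarrow> real \<Rightarrow> real" where
  "omega_par d K r = real d / real (K_omega d K r) - 1"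

definition alpha_par :: "nat \<Rightarrow> nat \<Rightarrow> real \<Rightarrow> real" where
  "alpha_par d K r = real (K_alpha d K r) / real d"

definition K_r :: "nat \<Rightarrow> nat \<Rightarrow> real \<Rightarrow> real" where
  "K_r d K r = (1 - r) * real (K_omega d K r) + r * real (K_alpha d K r)"

definition mu_r :: "nat \<Rightarrow> nat \<Rightarrow> real \<Rightarrow> real" where
  "mu_r d K r = r * real d / K_r d K r"

definition m_realistic ::
  "nat \<Rightarrow> nat \<Rightarrow> nat \<Rightarrow> real \<Rightarrow> real \<Rightarrow> real \<Rightarrow> real \<Rightarrow> real" where
  "m_realistic n d K L Lmax \<mu> r =
     (let \<omega> = omega_par d K r; \<alpha> = alpha_par d K r; M = mu_r d K r;
          mx = max (\<omega> + 1) M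
      in K_r d K r * (sqrt (L * mx / (\<alpha> * \<mu>))
                     + sqrt (Lmax * \<omega> * mx / (real n * \<mu>))
                     + 1 / \<alpha> + \<omega> + M) + real d)"

end

theory Submission
  imports Defs
begin

text \<open>Both compressors keep between \<open>K\<close> and \<open>d\<close> coordinates, and the ceiling in their
  definition costs at most one coordinate, so \<open>K \<le> K\<^sup>r \<le> 2K + 1 \<le> 3K\<close>. Hence
  \<open>\<omega> + 1\<close>, \<open>1/\<alpha>\<close> and \<open>\<mu>\<^sup>r = r d / K\<^sup>r\<close> are all at most \<open>d/K\<close>, and since \<open>Lmax / n \<le> L\<close>,
  each of the six summands of the realistic cost is at most \<open>3 d \<surd>(L/\<mu>)\<close>.\<close>

lemma le_nat_ceiling_mult:
  assumes "1 \<le> c"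
  shows "K \<le> nat \<lceil>c * real K\<rceil>"
proof -
  have "real K \<le> c * real K"
    using assms by (simp add: mult_le_cancel_right1)
  then show ?thesis
    by linarith
qed

lemma mult_min_nat_ceiling_le:
  fixes s t :: real
  assumes "0 < s" "0 \<le> t"
  shows "s * real (min (nat \<lceil>t / s * real K\<rceil>) d) \<le> t * real K + s"
proof -
  have "0 \<le> t / s * real K"
    using assms by simp
  then have "real (min (nat \<lceil>t / s * real K\<rceil>) d) \<le> t / s * real K + 1"
    by linarith
  then have "s * real (min (nat \<lceil>t / s * real K\<rceil>) d) \<le> s * (t / s * real K + 1)"
    using assms(1) by (intro mult_left_mono) auto
  then show ?thesis
    using assms(1) by (simp add: algebra_simps)
qed

lemma K_omega_le: "K \<le> d \<Longrightarrow> K_omega d K r \<le> d"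
  by (simp add: K_omega_def)

lemma K_le_K_omega:
  assumes "K \<le> d" "r \<le> 1"
  shows "K \<le> K_omega d K r"
proof -
  have "K \<le> min (nat \<lceil>r / (1 - r) * real K\<rceil>) d" if "1/2 < r" "r < 1"
    using that assms(1) le_nat_ceiling_mult[of "r / (1 - r)" K] by (simp add: field_simps)
  then show ?thesis
    using assms by (auto simp: K_omega_def)
qed

lemma K_le_K_alpha:
  assumes "K \<le> d" "0 \<le> r"
  shows "K \<le> K_alpha d K r"
proof -
  have "K \<le> min (nat \<lceil>(1 - r) / r * real K\<rceil>) d" if "0 < r" "r \<le> 1/2"
    using that assms(1) le_nat_ceiling_mult[of "(1 - r) / r" K] by (simp add: field_simps)
  then show ?thesis
    using assms by (auto simp: K_alpha_def)
qed

lemma K_le_K_r: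
  assumes "K \<le> d" "0 \<le> r" "r \<le> 1"
  shows "real K \<le> K_r d K r"
proof -
  have "(1 - r) * real K \<le> (1 - r) * real (K_omega d K r)"
    using K_le_K_omega[OF assms(1,3)] assms(3) by (intro mult_left_mono) auto
  moreover have "r * real K \<le> r * real (K_alpha d K r)"
    using K_le_K_alpha[OF assms(1,2)] assms(2) by (intro mult_left_mono) auto
  ultimately show ?thesis
    by (simp add: K_r_def algebra_simps)
qed

lemma K_r_le:
  assumes "0 \<le> r" "r \<le> 1"
  shows "K_r d K r \<le> 2 * real K + 1"
proof -
  have rK: "0 \<le> r * real K" "r * real K \<le> real K"
    using assms by (auto simp: mult_left_le_one_le)
  show ?thesis
  proof (cases "r \<le> 1/2")
    case small: True
    show ?thesis
    proof (cases "r = 0")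
      case False
      then have "r * real (K_alpha d K r) \<le> (1 - r) * real K + r"
        using small assms mult_min_nat_ceiling_le[of r "1 - r"] by (simp add: K_alpha_def)
      then show ?thesis
        using small rK by (simp add: K_r_def K_omega_def algebra_simps)
    qed (simp add: K_r_def K_omega_def)
  next
    case large: False
    show ?thesis
    proof (cases "r = 1")
      case False
      then have "(1 - r) * real (K_omega d K r) \<le> r * real K + (1 - r)"
        using large assms mult_min_nat_ceiling_le[of "1 - r" r] by (simp add: K_omega_def)
      then show ?thesis
        using large rK by (simp add: K_r_def K_alpha_def algebra_simps)
    qed (simp add: K_r_def K_alpha_def)
  qed
qed

lemma omega_par_bounds:
  assumes "1 \<le> K" "K \<le> d" "r \<le> 1"
  shows "0 \<le> omega_par d K r" "omega_par d K r + 1 \<le> real d / real K"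
  using K_le_K_omega[OF assms(2,3)] K_omega_le[OF assms(2), of r] assms(1)
  by (simp_all add: omega_par_def frac_le)

lemma alpha_par_bounds:
  assumes "1 \<le> K" "K \<le> d" "0 \<le> r"
  shows "0 < alpha_par d K r" "1 / alpha_par d K r \<le> real d / real K"
  using K_le_K_alpha[OF assms(2,3)] assms(1,2) by (simp_all add: alpha_par_def frac_le)

lemma mu_r_bounds:
  assumes "1 \<le> K" "K \<le> d" "0 \<le> r" "r \<le> 1"
  shows "0 \<le> mu_r d K r" "mu_r d K r \<le> real d / real K" "K_r d K r * mu_r d K r \<le> real d"
proof -
  have K_r: "real K \<le> K_r d K r" "0 < K_r d K r"
    using K_le_K_r[OF assms(2-4)] assms(1) by auto
  have "r * real d \<le> real d"
    using assms(3,4) by (intro mult_left_le_one_le) auto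
  moreover have "real d / K_r d K r \<le> real d / real K"
    using K_r assms(1) by (simp add: frac_le)
  ultimately show "0 \<le> mu_r d K r" "mu_r d K r \<le> real d / real K" "K_r d K r * mu_r d K r \<le> real d"
    using K_r assms(3) by (auto simp: mu_r_def intro: order_trans[OF divide_right_mono])
qed

lemma K_r_mult_le:
  assumes "1 \<le> K" "0 \<le> r" "r \<le> 1"
  shows "K_r d K r * (real d / real K) \<le> 3 * real d"
proof -
  have "K_r d K r \<le> 3 * real K"
    using K_r_le[OF assms(2,3), of d K] assms(1) by linarith
  then have "K_r d K r * (real d / real K) \<le> 3 * real K * (real d / real K)"
    by (rule mult_right_mono) simp
  then show ?thesis
    using assms(1) by simp
qed

lemma sqrt_le_mult_sqrt:
  fixes x \<kappa> D :: real
  assumes "x \<le> \<kappa> * (D * D)" "0 \<le> D"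
  shows "sqrt x \<le> D * sqrt \<kappa>"
proof -
  have "sqrt x \<le> sqrt (\<kappa> * D\<^sup>2)"
    using assms(1) by (simp add: power2_eq_square)
  also have "\<dots> = D * sqrt \<kappa>"
    using assms(2) by (simp add: real_sqrt_mult)
  finally show ?thesis .
qed

lemma realistic_cost_le:
  fixes X D d \<omega> \<alpha> M L Lmax \<mu> n :: real
  assumes \<mu>: "0 < \<mu>" "\<mu> \<le> L" and Lmax: "Lmax \<le> n * L" "0 < n"
    and X: "0 < X" "X * D \<le> 3 * d" "X * M \<le> d"
    and \<omega>: "0 \<le> \<omega>" "\<omega> + 1 \<le> D"
    and \<alpha>: "0 < \<alpha>" "1 / \<alpha> \<le> D"
    and M: "0 \<le> M" "M \<le> D"
  shows "X * (sqrt (L * max (\<omega> + 1) M / (\<alpha> * \<mu>))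
            + sqrt (Lmax * \<omega> * max (\<omega> + 1) M / (n * \<mu>))
            + 1 / \<alpha> + \<omega> + M) + d \<le> 14 * d * sqrt (L / \<mu>)"
proof -
  define \<kappa> where "\<kappa> = L / \<mu>"
  define mx where "mx = max (\<omega> + 1) M"
  have \<kappa>: "1 \<le> \<kappa>"
    using \<mu> by (simp add: \<kappa>_def)
  have mx: "0 \<le> mx" "mx \<le> D"
    using \<omega> M by (auto simp: mx_def)
  have "0 \<le> d"
    using X M by (metis mult_nonneg_nonneg less_imp_le order_trans)
  then have d: "d \<le> d * sqrt \<kappa>"
    using \<kappa> by (simp add: mult_le_cancel_left1)
  have D: "0 \<le> D"
    using \<omega> by simp
  have XD: "X * (D * sqrt \<kappa>) \<le> 3 * (d * sqrt \<kappa>)"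
    using mult_right_mono[OF X(2), of "sqrt \<kappa>"] \<kappa> by (simp add: mult.assoc)
  have "L * mx / (\<alpha> * \<mu>) = \<kappa> * (mx * (1 / \<alpha>))"
    by (simp add: \<kappa>_def)
  also have "\<dots> \<le> \<kappa> * (D * D)"
    using mx \<alpha> \<kappa> by (intro mult_left_mono mult_mono) auto
  finally have sqrt1: "sqrt (L * mx / (\<alpha> * \<mu>)) \<le> D * sqrt \<kappa>"
    using D by (rule sqrt_le_mult_sqrt)
  have "Lmax / n \<le> L"
    using Lmax by (simp add: field_simps)
  have "Lmax * \<omega> * mx / (n * \<mu>) = Lmax / n / \<mu> * (\<omega> * mx)"
    by simp
  also have "\<dots> \<le> L / \<mu> * (\<omega> * mx)"
    using \<open>Lmax / n \<le> L\<close> \<mu> \<omega> mx by (intro mult_right_mono divide_right_mono) auto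
  also have "\<dots> \<le> \<kappa> * (D * D)"
    using mx \<omega> \<kappa> unfolding \<kappa>_def[symmetric] by (intro mult_left_mono mult_mono) auto
  finally have sqrt2: "sqrt (Lmax * \<omega> * mx / (n * \<mu>)) \<le> D * sqrt \<kappa>"
    using D by (rule sqrt_le_mult_sqrt)
  have "X * sqrt (L * mx / (\<alpha> * \<mu>)) \<le> X * (D * sqrt \<kappa>)"
       "X * sqrt (Lmax * \<omega> * mx / (n * \<mu>)) \<le> X * (D * sqrt \<kappa>)"
       "X * (1 / \<alpha>) \<le> X * D" "X * \<omega> \<le> X * D"
    using sqrt1 sqrt2 \<alpha>(2) \<omega>(2) X(1) by (simp_all only: mult_left_mono less_imp_le)
  moreover have "14 * d * sqrt \<kappa> = 14 * (d * sqrt \<kappa>)"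
    by simp
  ultimately show ?thesis
    using XD d X(2,3) unfolding mx_def \<kappa>_def[symmetric] distrib_left by linarith
qed

theorem theorem5:
  shows "\<exists>C::real. C > 0 \<and>
    (\<forall>(n::nat) (d::nat) (K::nat) (\<mu>::real) (L::real) (Lmax::real) (r::real).
       1 \<le> n \<longrightarrow> 1 \<le> d \<longrightarrow> 1 \<le> K \<longrightarrow> K \<le> d \<longrightarrow>
       0 < \<mu> \<longrightarrow> \<mu> \<le> L \<longrightarrow> L \<le> Lmax \<longrightarrow> Lmax \<le> real n * L \<longrightarrow>
       0 \<le> r \<longrightarrow> r \<le> 1 \<longrightarrow>
       m_realistic n d K L Lmax \<mu> r \<le> C * real d * sqrt (L / \<mu>))"
proof (intro exI[of _ 14] conjI allI impI)
  fix n d K :: nat and \<mu> L Lmax r :: real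
  assume hyps: "1 \<le> n" "1 \<le> d" "1 \<le> K" "K \<le> d" "0 < \<mu>" "\<mu> \<le> L" "L \<le> Lmax"
    "Lmax \<le> real n * L" "0 \<le> r" "r \<le> 1"
  show "m_realistic n d K L Lmax \<mu> r \<le> 14 * real d * sqrt (L / \<mu>)"
    unfolding m_realistic_def Let_def
    using omega_par_bounds alpha_par_bounds mu_r_bounds K_r_mult_le K_le_K_r[of K d r]
    by (intro realistic_cost_le[where D = "real d / real K"]) (use hyps in simp_all)
qed simp

end
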